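(* Let $0<\alpha<1$, $\lambda\in\mathbb{R}$, $T>0$, integers $N,M\ge 2$, $\tau=T/N$, $h=(b-a)/M$, and grid points $x_i=a+ih$, $0\le i\le M$. Let $\{v_i^n\}$ ($0\le i\le M$, $0\le n\le N$) satisfy $$\mathcal{A}_x\delta_{t}^{\alpha,\lambda} v_i^{n}-\mathcal{A}_t^{\alpha}\delta_{x}^2v_i^{n}=S_i^{n},\quad 1\leq i\leq M-1,\ 1\leq n\leq N,$$ $$v^n_0=0,\quad v^n_M=0,\quad 1\le n\le N,\qquad v^0_i=v_0(x_i),\quad 0\le i\le M,$$ where $v_0(x_0)=v_0(x_M)=0$ and $S_i^n$ are given. If $2-\alpha-e^{\lambda\tau}\ge0$, then for $1<n\le N$, $$\|v^n\|^2\leq \frac{3}{2}e^{2|\lambda|T}\|v^{0}\|^2+\frac{3\Gamma(1-\alpha)T^{\alpha}e^{2|\lambda|T}}{C_{\Omega}} \max_{0\leq n\leq N}\|S^n\|^2,$$ where $\|S^n\|=\sqrt{h\sum_{i=1}^{M-1}(S_i^n)^2}$.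
   Context: $g_k^{\alpha}=(-1)^k\binom{\alpha}{k}$ are the coefficients of $(1-z)^{\alpha}=\sum_{k\ge0}g_k^{\alpha}z^k$ and $g_k^{\alpha,\lambda}=e^{-(k-\frac{\alpha}{2})\lambda\tau}g_k^{\alpha}$. Time operators (applied for each fixed $i$): $\delta_t^{\alpha,\lambda}v_i^n=\tau^{-\alpha}\sum_{k=0}^{n}g_k^{\alpha,\lambda}v_i^{n-k}$ and $\mathcal{A}_t^{\alpha}v_i^n=(1-\frac{\alpha}{2})v_i^n+\frac{\alpha}{2}v_i^{n-1}$. Space operators: $\delta_x^2v_i=h^{-2}(v_{i-1}-2v_i+v_{i+1})$, and $\mathcal{A}_xv_i=\frac{1}{12}(v_{i-1}+10v_i+v_{i+1})$ for $1\le i\le M-1$, $\mathcal{A}_xv_i=v_i$ for $i=0,M$. For grid functions $u,v$ on $\{x_0,\dots,x_M\}$ vanishing at $x_0,x_M$ (the space $V_h$), $(u,v)=h\sum_{i=1}^{M-1}u_iv_i$ and $\|v\|=\sqrt{(v,v)}$. $C_\Omega>0$ is a constant depending only on $\Omega=(a,b)$ (not on $h$) such that $-(\delta_x^2v,v)\ge C_\Omega\|v\|^2$ for all $v\in V_h$ and all mesh sizes $h$. *)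

theory Defs
  imports "HOL-Analysis.Analysis"
begin

text \<open>Grid functions in time and space are represented as v :: nat => nat => real,
  with v n i the value at time level n and spatial node i.\<close>

definition gl_coef :: "real \<Rightarrow> nat \<Rightarrow> real" where
  "gl_coef \<alpha> k = (-1) ^ k * (\<alpha> gchoose k)"

definition tgl_coef :: "real \<Rightarrow> real \<Rightarrow> real \<Rightarrow> nat \<Rightarrow> real" where
  "tgl_coef \<alpha> lam \<tau> k = exp (- (real k - \<alpha> / 2) * lam * \<tau>) * gl_coef \<alpha> k"

definition delta_t :: "real \<Rightarrow> real \<Rightarrow> real \<Rightarrow> (nat \<Rightarrow> nat \<Rightarrow> real) \<Rightarrow> nat \<Rightarrow> nat \<Rightarrow> real" where
  "delta_t \<alpha> lam \<tau> v n i = \<tau> powr (- \<alpha>) * (\<Sum>k = 0..n. tgl_coef \<alpha> lam \<tau> k * v (n - k) i)"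

definition A_t :: "real \<Rightarrow> (nat \<Rightarrow> nat \<Rightarrow> real) \<Rightarrow> nat \<Rightarrow> nat \<Rightarrow> real" where
  "A_t \<alpha> v n i = (1 - \<alpha> / 2) * v n i + \<alpha> / 2 * v (n - 1) i"

definition delta_x2 :: "real \<Rightarrow> (nat \<Rightarrow> real) \<Rightarrow> nat \<Rightarrow> real" where
  "delta_x2 h u i = (u (i - 1) - 2 * u i + u (i + 1)) / h ^ 2"

definition A_x :: "nat \<Rightarrow> (nat \<Rightarrow> real) \<Rightarrow> nat \<Rightarrow> real" where
  "A_x M u i = (if 1 \<le> i \<and> i \<le> M - 1 then (u (i - 1) + 10 * u i + u (i + 1)) / 12 else u i)"

definition grid_inner :: "real \<Rightarrow> nat \<Rightarrow> (nat \<Rightarrow> real) \<Rightarrow> (nat \<Rightarrow> real) \<Rightarrow> real" where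
  "grid_inner h M u w = h * (\<Sum>i = 1..M - 1. u i * w i)"

definition grid_norm :: "real \<Rightarrow> nat \<Rightarrow> (nat \<Rightarrow> real) \<Rightarrow> real" where
  "grid_norm h M u = sqrt (grid_inner h M u u)"

end

theory Submission
  imports Defs
begin

text \<open>
  Put \<open>E = exp (lam * \<tau>)\<close>. Substituting \<open>w\<^sup>m = E\<^sup>m v\<^sup>m\<close> turns the tempered operator into the plain
  Grunwald-Letnikov sum with coefficients \<open>g\<^sub>k\<close>, where \<open>g\<^sub>0 = 1\<close>, \<open>g\<^sub>1 = -\<alpha>\<close> and \<open>g\<^sub>k \<le> 0\<close> for \<open>k \<ge> 2\<close>.
  Testing the transformed scheme with \<open>A\<^sub>t w\<^sup>m\<close> and using coercivity of \<open>-\<delta>\<^sub>x\<^sup>2\<close> and Young's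
  inequality bounds \<open>\<Sum>\<^sub>k g\<^sub>k ((1 - \<alpha>/2) p(m-k,m) + (\<alpha>/2) E p(m-k,m-1))\<close> by the source, where \<open>p\<close> is the
  symmetric positive form induced by \<open>A\<^sub>x\<close>. Since \<open>E \<le> 2 - \<alpha>\<close> every coefficient except that of \<open>p(m,m)\<close>
  is nonpositive, so Cauchy-Schwarz for \<open>p\<close> and induction on \<open>m\<close> bound all \<open>p(m,m)\<close> by one constant.
  Its size comes from \<open>(\<Sum>\<^sub>k\<^sub>\<le>\<^sub>m g\<^sub>k) \<Gamma>(1-\<alpha>) \<ge> (m+1)\<^sup>-\<^sup>\<alpha>\<close>, a consequence of the log-convexity of \<open>\<Gamma>\<close>.
\<close>

lemma gl_coef_0: "gl_coef \<alpha> 0 = 1"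
  by (simp add: gl_coef_def)

lemma gl_coef_1: "gl_coef \<alpha> 1 = - \<alpha>"
  by (simp add: gl_coef_def)

lemma gl_coef_nonpos:
  assumes "0 \<le> \<alpha>" "\<alpha> < 1" "1 \<le> k"
  shows "gl_coef \<alpha> k \<le> 0"
proof -
  obtain j where k: "k = Suc j" using assms(3) by (cases k) auto
  have "gl_coef \<alpha> k = - \<alpha> * pochhammer (1 - \<alpha>) j / fact k"
    by (simp add: gl_coef_def gbinomial_pochhammer k pochhammer_rec)
  also have "\<dots> \<le> 0"
    using assms pochhammer_pos[of "1 - \<alpha>" j] by (simp add: divide_nonpos_pos)
  finally show ?thesis .
qed

lemma sum_gl_coef: "(\<Sum>k = 0..j. gl_coef \<alpha> k) = pochhammer (1 - \<alpha>) j / fact j"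
proof -
  have "(\<Sum>k = 0..j. gl_coef \<alpha> k) = (\<Sum>k\<le>j. (\<alpha> gchoose k) * (- 1) ^ k)"
    by (simp add: gl_coef_def atMost_atLeast0 mult.commute)
  also have "\<dots> = (- 1) ^ j * (\<alpha> - 1 gchoose j)"
    by (rule gbinomial_sum_lower_neg)
  finally show ?thesis by (simp add: gbinomial_pochhammer)
qed

lemma sum_gl_coef_pos: "\<alpha> < 1 \<Longrightarrow> 0 < (\<Sum>k = 0..j. gl_coef \<alpha> k)"
  using pochhammer_pos[of "1 - \<alpha>" j] by (simp add: sum_gl_coef)

text \<open>Wendel's inequality, from log-convexity of \<open>Gamma\<close> on \<open>[x, x + 1]\<close>.\<close>

lemma Gamma_add_le_powr_Gamma:
  fixes x \<alpha> :: real
  assumes "0 < x" "0 \<le> \<alpha>" "\<alpha> \<le> 1"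
  shows "Gamma (x + \<alpha>) \<le> x powr \<alpha> * Gamma x"
proof -
  have "(ln \<circ> Gamma) ((1 - \<alpha>) *\<^sub>R x + \<alpha> *\<^sub>R (x + 1))
      \<le> (1 - \<alpha>) * (ln \<circ> Gamma) x + \<alpha> * (ln \<circ> Gamma) (x + 1)"
    using assms by (intro convex_onD[OF log_convex_Gamma_real]) auto
  moreover have "(1 - \<alpha>) *\<^sub>R x + \<alpha> *\<^sub>R (x + 1) = x + \<alpha>"
    by (simp add: algebra_simps)
  moreover have "Gamma (x + 1) = x * Gamma x"
    using assms(1) by (intro Gamma_plus1) (auto dest: nonpos_Ints_nonpos)
  moreover have "0 < Gamma x" "Gamma x \<noteq> 0"
    using Gamma_real_pos[OF assms(1)] by auto
  ultimately have "ln (Gamma (x + \<alpha>)) \<le> ln (x powr \<alpha> * Gamma x)"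
    using assms by (simp add: ln_mult ln_powr algebra_simps)
  then show ?thesis
    using assms Gamma_real_pos[of x] Gamma_real_pos[of "x + \<alpha>"] by simp
qed

lemma sum_gl_coef_Gamma_ge:
  fixes \<alpha> :: real
  assumes "0 < \<alpha>" "\<alpha> < 1"
  shows "1 / (real j + 1) powr \<alpha> \<le> (\<Sum>k = 0..j. gl_coef \<alpha> k) * Gamma (1 - \<alpha>)"
proof -
  have "1 - \<alpha> \<notin> \<int>\<^sub>\<le>\<^sub>0" using assms by (auto dest: nonpos_Ints_nonpos)
  then have "pochhammer (1 - \<alpha>) j = Gamma (real j + 1 - \<alpha>) / Gamma (1 - \<alpha>)"
    by (subst pochhammer_Gamma) (auto simp: algebra_simps)
  moreover have "fact j = Gamma (real j + 1)"
    using Gamma_fact[of j, where 'a = real] by (simp add: add.commute)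
  moreover have "0 < Gamma (1 - \<alpha>)"
    using assms by (intro Gamma_real_pos) simp
  ultimately have sum_eq: "(\<Sum>k = 0..j. gl_coef \<alpha> k) * Gamma (1 - \<alpha>) = Gamma (real j + 1 - \<alpha>) / Gamma (real j + 1)"
    by (simp add: sum_gl_coef)
  have "Gamma (real j + 1) \<le> (real j + 1 - \<alpha>) powr \<alpha> * Gamma (real j + 1 - \<alpha>)"
    using Gamma_add_le_powr_Gamma[of "real j + 1 - \<alpha>" \<alpha>] assms by simp
  also have "\<dots> \<le> (real j + 1) powr \<alpha> * Gamma (real j + 1 - \<alpha>)"
    using assms by (intro mult_right_mono powr_mono2 less_imp_le Gamma_real_pos) auto
  finally show ?thesis
    unfolding sum_eq using Gamma_real_pos[of "real j + 1"]
    by (simp add: divide_simps mult.commute)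
qed

lemma sum_gl_coef_Gamma_ge_grid:
  fixes \<alpha> \<tau> :: real
  assumes "0 < \<alpha>" "\<alpha> < 1" "0 < \<tau>" "j \<le> N" "1 \<le> N"
  shows "\<tau> powr \<alpha> \<le> 2 * (\<Sum>k = 0..j. gl_coef \<alpha> k) * Gamma (1 - \<alpha>) * (real N * \<tau>) powr \<alpha>"
proof -
  have "(real j + 1) powr \<alpha> \<le> (2 * real N) powr \<alpha>"
    using assms by (intro powr_mono2) auto
  also have "\<dots> \<le> 2 * real N powr \<alpha>"
    using assms powr_mono[of \<alpha> 1 2] by (simp add: powr_mult)
  moreover have "0 < real N powr \<alpha>" "0 < (real j + 1) powr \<alpha>"
    using assms by auto
  ultimately have "1 / (2 * real N powr \<alpha>) \<le> 1 / (real j + 1) powr \<alpha>"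
    by (intro divide_left_mono) auto
  also have "\<dots> \<le> (\<Sum>k = 0..j. gl_coef \<alpha> k) * Gamma (1 - \<alpha>)"
    using assms(1,2) by (rule sum_gl_coef_Gamma_ge)
  finally show ?thesis
    using assms by (simp add: powr_mult field_simps)
qed

text \<open>By \<open>grid_inner_A_x\<close>, \<open>h / 12 * Ax_form M x y\<close> is \<open>(A\<^sub>x x, y)\<close> for \<open>y\<close> vanishing at the boundary;
  unlike the latter it is symmetric in \<open>x\<close> and \<open>y\<close>.\<close>

definition Ax_form :: "nat \<Rightarrow> (nat \<Rightarrow> real) \<Rightarrow> (nat \<Rightarrow> real) \<Rightarrow> real" where
  "Ax_form M x y = 10 * (\<Sum>i = 1..M - 1. x i * y i) + (\<Sum>i<M. x i * y (Suc i) + x (Suc i) * y i)"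

lemma Ax_form_commute: "Ax_form M x y = Ax_form M y x"
  unfolding Ax_form_def by (simp add: mult.commute add.commute)

lemma Ax_form_sum_left:
  "Ax_form M (\<lambda>i. \<Sum>k\<in>K. c k * f k i) y = (\<Sum>k\<in>K. c k * Ax_form M (f k) y)"
proof (induction K rule: infinite_finite_induct)
  case (insert k K)
  then show ?case
    by (simp add: Ax_form_def algebra_simps sum.distrib sum_distrib_left)
qed (simp_all add: Ax_form_def)

lemma Ax_form_linear_right:
  "Ax_form M x (\<lambda>i. a * y i + b * z i) = a * Ax_form M x y + b * Ax_form M x z"
  by (simp add: Ax_form_def algebra_simps sum.distrib sum_distrib_left)

lemma grid_inner_A_x:
  assumes "1 \<le> M" "y 0 = 0" "y M = 0"
  shows "12 * grid_inner h M (A_x M x) y = h * Ax_form M x y"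
proof -
  obtain m where m: "M = Suc m" using assms(1) by (cases M) auto
  have "12 * (\<Sum>i = 1..m. A_x M x i * y i)
      = (\<Sum>i = 1..m. x (i - 1) * y i + 10 * (x i * y i) + x (Suc i) * y i)"
    unfolding sum_distrib_left by (rule sum.cong) (auto simp: A_x_def m field_simps)
  also have "\<dots> = (\<Sum>i = 1..m. x (i - 1) * y i) + 10 * (\<Sum>i = 1..m. x i * y i)
      + (\<Sum>i = 1..m. x (Suc i) * y i)"
    by (simp add: sum.distrib sum_distrib_left)
  also have "(\<Sum>i = 1..m. x (i - 1) * y i) = (\<Sum>i<M. x i * y (Suc i))"
    using assms(3) by (simp add: m sum.atLeast1_atMost_eq)
  also have "(\<Sum>i = 1..m. x (Suc i) * y i) = (\<Sum>i<M. x (Suc i) * y i)"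
    using assms(2) by (simp add: m sum.lessThan_Suc_shift sum.atLeast1_atMost_eq del: sum.lessThan_Suc)
  finally show ?thesis
    by (simp add: grid_inner_def Ax_form_def m sum.distrib algebra_simps)
qed

lemma Ax_form_bounds:
  assumes "1 \<le> M" "x 0 = 0" "x M = 0"
  shows "8 * (\<Sum>i = 1..M - 1. x i * x i) \<le> Ax_form M x x"
    and "Ax_form M x x \<le> 12 * (\<Sum>i = 1..M - 1. x i * x i)"
proof -
  obtain m where m: "M = Suc m" using assms(1) by (cases M) auto
  have left: "(\<Sum>i<M. x i * x i) = (\<Sum>i = 1..M - 1. x i * x i)"
    using assms(2) by (simp add: m sum.lessThan_Suc_shift sum.atLeast1_atMost_eq del: sum.lessThan_Suc)
  have right: "(\<Sum>i<M. x (Suc i) * x (Suc i)) = (\<Sum>i = 1..M - 1. x i * x i)"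
    using assms(3) by (simp add: m sum.atLeast1_atMost_eq)
  have pair: "\<bar>x i * x (Suc i) + x (Suc i) * x i\<bar> \<le> x i * x i + x (Suc i) * x (Suc i)" for i
    using sum_squares_ge_zero[of "x i + x (Suc i)" 0] sum_squares_ge_zero[of "x i - x (Suc i)" 0]
    by (simp add: abs_le_iff algebra_simps power2_eq_square)
  then have "\<bar>\<Sum>i<M. x i * x (Suc i) + x (Suc i) * x i\<bar> \<le> (\<Sum>i<M. x i * x i + x (Suc i) * x (Suc i))"
    by (intro order_trans[OF sum_abs] sum_mono pair)
  then show "8 * (\<Sum>i = 1..M - 1. x i * x i) \<le> Ax_form M x x"
    and "Ax_form M x x \<le> 12 * (\<Sum>i = 1..M - 1. x i * x i)"
    using left right by (simp_all add: Ax_form_def sum.distrib abs_le_iff)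
qed

lemma Ax_form_cauchy_schwarz:
  assumes "1 \<le> M" "x 0 = 0" "x M = 0" "y 0 = 0" "y M = 0"
  shows "2 * Ax_form M x y \<le> Ax_form M x x + Ax_form M y y"
proof -
  have "0 \<le> 8 * (\<Sum>i = 1..M - 1. (x i - y i) * (x i - y i))"
    by (simp add: sum_nonneg)
  also have "\<dots> \<le> Ax_form M (\<lambda>i. x i - y i) (\<lambda>i. x i - y i)"
    using assms by (intro Ax_form_bounds(1)) auto
  also have "\<dots> = Ax_form M x x - 2 * Ax_form M x y + Ax_form M y y"
    by (simp add: Ax_form_def algebra_simps sum.distrib sum_subtractf sum_distrib_left)
  finally show ?thesis by simp
qed

lemma grid_inner_young:
  assumes "0 < C" "0 \<le> h"
  shows "grid_inner h M s u \<le> C * grid_inner h M u u + grid_inner h M s s / (4 * C)"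
proof -
  have "s i * u i \<le> C * (u i * u i) + s i * s i / (4 * C)" for i
  proof -
    have "0 \<le> (2 * C * u i - s i)\<^sup>2 / (4 * C)" using assms by simp
    also have "\<dots> = C * (u i * u i) + s i * s i / (4 * C) - s i * u i"
      using assms by (simp add: field_simps power2_eq_square)
    finally show ?thesis by simp
  qed
  then have "h * (\<Sum>i = 1..M - 1. s i * u i) \<le> h * (\<Sum>i = 1..M - 1. C * (u i * u i) + s i * s i / (4 * C))"
    using assms(2) by (intro mult_left_mono sum_mono) auto
  then show ?thesis
    by (simp add: grid_inner_def sum.distrib sum_distrib_left sum_divide_distrib algebra_simps)
qed

lemma Ax_form_energy_estimate:
  assumes "0 < h" "0 < C" "1 \<le> M" "U 0 = 0" "U M = 0"
    and coercive: "C * grid_inner h M U U \<le> - grid_inner h M (delta_x2 h U) U"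
    and eq: "\<And>i. 1 \<le> i \<Longrightarrow> i \<le> M - 1 \<Longrightarrow> c * A_x M W i - delta_x2 h U i = s i"
  shows "c * h * Ax_form M W U \<le> 3 / C * grid_inner h M s s"
proof -
  have "(\<Sum>i = 1..M - 1. s i * U i) = (\<Sum>i = 1..M - 1. (c * A_x M W i - delta_x2 h U i) * U i)"
    using eq by (intro sum.cong) auto
  also have "\<dots> = c * (\<Sum>i = 1..M - 1. A_x M W i * U i) - (\<Sum>i = 1..M - 1. delta_x2 h U i * U i)"
    by (simp add: left_diff_distrib sum_subtractf sum_distrib_left mult.assoc)
  finally have sum_eq: "(\<Sum>i = 1..M - 1. s i * U i)
      = c * (\<Sum>i = 1..M - 1. A_x M W i * U i) - (\<Sum>i = 1..M - 1. delta_x2 h U i * U i)" .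
  have "grid_inner h M s U = c * grid_inner h M (A_x M W) U - grid_inner h M (delta_x2 h U) U"
    unfolding grid_inner_def sum_eq by (simp add: algebra_simps)
  moreover have "c * h * Ax_form M W U = 12 * (c * grid_inner h M (A_x M W) U)"
    using grid_inner_A_x[OF assms(3-5), of h W] by simp
  moreover have "grid_inner h M s U \<le> C * grid_inner h M U U + grid_inner h M s s / (4 * C)"
    using assms(1,2) by (intro grid_inner_young) auto
  moreover have "12 * (grid_inner h M s s / (4 * C)) = 3 / C * grid_inner h M s s"
    by simp
  ultimately show ?thesis
    using coercive by linarith
qed

lemma gl_energy_le_step:
  fixes g :: "nat \<Rightarrow> real" and p :: "nat \<Rightarrow> nat \<Rightarrow> real"
  assumes n: "1 \<le> n" and g0: "g 0 = 1" and g1: "g 1 = - \<alpha>"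
    and g_nonpos: "\<And>k. 2 \<le> k \<Longrightarrow> g k \<le> 0"
    and \<alpha>: "0 \<le> \<alpha>" "\<alpha> \<le> 1" and \<mu>: "0 \<le> \<mu>" "\<mu> \<le> \<alpha> * (1 - \<alpha> / 2)"
    and p_sym: "p n (n - 1) = p (n - 1) n"
    and p_cs: "\<And>j m. j \<le> n \<Longrightarrow> m \<le> n \<Longrightarrow> 2 * p j m \<le> p j j + p m m"
    and p_prev: "\<And>j. j < n \<Longrightarrow> p j j \<le> Q"
    and b_nonneg: "0 \<le> (\<Sum>k = 0..n. g k)"
    and energy: "(\<Sum>k = 0..n. g k * ((1 - \<alpha> / 2) * p (n - k) n + \<mu> * p (n - k) (n - 1)))
      \<le> (1 - \<alpha> / 2 + \<mu>) * (\<Sum>k = 0..n. g k) * Q"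
  shows "p n n \<le> Q"
proof -
  define F where "F k = g k * ((1 - \<alpha> / 2) * p (n - k) n + \<mu> * p (n - k) (n - 1))" for k
  define X where "X = p n n"
  define G where "G = (\<Sum>k = 2..n. g k)"
  have sum_F: "(\<Sum>k = 0..n. F k) = F 0 + F 1 + (\<Sum>k = 2..n. F k)"
    using n by (simp add: sum.atLeast_Suc_atMost numeral_2_eq_2)
  have sum_g: "(\<Sum>k = 0..n. g k) = 1 - \<alpha> + G"
    using n by (simp add: sum.atLeast_Suc_atMost numeral_2_eq_2 G_def g0 g1 g1[unfolded One_nat_def])
  have Z: "p (n - 1) (n - 1) \<le> Q" using p_prev n by simp
  have Y: "2 * p n (n - 1) \<le> X + Q" using p_cs[of n "n - 1"] Z by (simp add: X_def)
  have head: "(1 - \<alpha> / 2) * X + (\<mu> - \<alpha> * (1 - \<alpha> / 2)) * ((X + Q) / 2) - \<alpha> * \<mu> * Q \<le> F 0 + F 1"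
  proof -
    have "F 0 + F 1 = (1 - \<alpha> / 2) * X + (\<mu> - \<alpha> * (1 - \<alpha> / 2)) * p n (n - 1) - \<alpha> * \<mu> * p (n - 1) (n - 1)"
      using p_sym by (simp add: F_def X_def g0 g1 g1[unfolded One_nat_def] algebra_simps)
    moreover have "(\<mu> - \<alpha> * (1 - \<alpha> / 2)) * ((X + Q) / 2) \<le> (\<mu> - \<alpha> * (1 - \<alpha> / 2)) * p n (n - 1)"
      using Y \<mu> by (intro mult_left_mono_neg) auto
    moreover have "\<alpha> * \<mu> * p (n - 1) (n - 1) \<le> \<alpha> * \<mu> * Q"
      using Z \<alpha> \<mu> by (intro mult_left_mono) auto
    ultimately show ?thesis by linarith
  qed
  have tail: "G * ((1 - \<alpha> / 2) * ((X + Q) / 2) + \<mu> * Q) \<le> (\<Sum>k = 2..n. F k)"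
    unfolding G_def sum_distrib_right
  proof (rule sum_mono)
    fix k assume k: "k \<in> {2..n}"
    have "p (n - k) n \<le> (X + Q) / 2"
      using p_cs[of "n - k" n] p_prev[of "n - k"] k by (simp add: X_def)
    moreover have "p (n - k) (n - 1) \<le> Q"
      using p_cs[of "n - k" "n - 1"] p_prev[of "n - k"] Z k by simp
    ultimately have "(1 - \<alpha> / 2) * p (n - k) n + \<mu> * p (n - k) (n - 1) \<le> (1 - \<alpha> / 2) * ((X + Q) / 2) + \<mu> * Q"
      using \<alpha> \<mu> by (intro add_mono mult_left_mono) auto
    then show "g k * ((1 - \<alpha> / 2) * ((X + Q) / 2) + \<mu> * Q) \<le> F k"
      unfolding F_def using g_nonpos[of k] k by (intro mult_left_mono_neg) auto
  qed
  define c where "c = ((1 - \<alpha> / 2) * (2 - \<alpha> + G) + \<mu>) / 2"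
  have "(1 - \<alpha> / 2) * X + (\<mu> - \<alpha> * (1 - \<alpha> / 2)) * ((X + Q) / 2) - \<alpha> * \<mu> * Q
      + G * ((1 - \<alpha> / 2) * ((X + Q) / 2) + \<mu> * Q) = c * (X - Q) + (1 - \<alpha> / 2 + \<mu>) * (1 - \<alpha> + G) * Q"
    by (simp add: c_def field_simps)
  then have "c * (X - Q) \<le> 0"
    using energy[unfolded sum_g] head tail sum_F unfolding F_def by linarith
  moreover have "0 < (1 - \<alpha> / 2) * (2 - \<alpha> + G)"
    using b_nonneg sum_g \<alpha> by (intro mult_pos_pos) auto
  then have "0 < c"
    using \<mu> by (simp add: c_def)
  ultimately show ?thesis
    by (simp add: X_def mult_le_0_iff)
qed

lemma gl_energy_le:
  fixes g :: "nat \<Rightarrow> real" and p :: "nat \<Rightarrow> nat \<Rightarrow> real"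
  assumes g0: "g 0 = 1" and g1: "g 1 = - \<alpha>" and g_nonpos: "\<And>k. 2 \<le> k \<Longrightarrow> g k \<le> 0"
    and \<alpha>: "0 \<le> \<alpha>" "\<alpha> \<le> 1" and \<mu>: "0 \<le> \<mu>" "\<mu> \<le> \<alpha> * (1 - \<alpha> / 2)"
    and p_sym: "\<And>j m. p j m = p m j"
    and p_cs: "\<And>j m. j \<le> N \<Longrightarrow> m \<le> N \<Longrightarrow> 2 * p j m \<le> p j j + p m m"
    and b_nonneg: "\<And>m. 0 \<le> (\<Sum>k = 0..m. g k)"
    and init: "p 0 0 \<le> Q"
    and energy: "\<And>m. 1 \<le> m \<Longrightarrow> m \<le> N \<Longrightarrow>
      (\<Sum>k = 0..m. g k * ((1 - \<alpha> / 2) * p (m - k) m + \<mu> * p (m - k) (m - 1)))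
        \<le> (1 - \<alpha> / 2 + \<mu>) * (\<Sum>k = 0..m. g k) * Q"
  shows "n \<le> N \<Longrightarrow> p n n \<le> Q"
proof (induction n rule: less_induct)
  case (less n)
  show ?case
  proof (cases "n = 0")
    case False
    then show ?thesis
      using less g_nonpos \<alpha> \<mu> p_cs b_nonneg energy[of n]
      by (intro gl_energy_le_step[of n g \<alpha> \<mu> p Q]) (auto simp: g0 g1 g1[unfolded One_nat_def] p_sym)
  qed (simp add: init)
qed

lemma grid_inner_self_nonneg: "0 \<le> h \<Longrightarrow> 0 \<le> grid_inner h M u u"
  by (simp add: grid_inner_def sum_nonneg)

lemma grid_norm_sq: "0 \<le> h \<Longrightarrow> grid_norm h M u ^ 2 = grid_inner h M u u"
  by (simp add: grid_norm_def grid_inner_self_nonneg)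

lemma A_x_scale: "A_x M (\<lambda>j. c * f j) i = c * A_x M f i"
  by (simp add: A_x_def field_simps)

lemma delta_t_weighted_sum:
  "delta_t \<alpha> lam \<tau> v m j = \<tau> powr (- \<alpha>) * exp (\<alpha> / 2 * lam * \<tau>) / exp (lam * \<tau>) ^ m
     * (\<Sum>k = 0..m. gl_coef \<alpha> k * (exp (lam * \<tau>) ^ (m - k) * v (m - k) j))"
proof -
  have "tgl_coef \<alpha> lam \<tau> k * v (m - k) j
      = exp (\<alpha> / 2 * lam * \<tau>) / exp (lam * \<tau>) ^ m * (gl_coef \<alpha> k * (exp (lam * \<tau>) ^ (m - k) * v (m - k) j))"
    if "k \<le> m" for k
  proof -
    have "exp (lam * \<tau>) ^ m = exp (lam * \<tau>) ^ k * exp (lam * \<tau>) ^ (m - k)"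
      using that by (simp flip: power_add)
    moreover have "exp (- (real k - \<alpha> / 2) * lam * \<tau>) * exp (lam * \<tau>) ^ k = exp (\<alpha> / 2 * lam * \<tau>)"
      by (simp add: exp_of_nat_mult[symmetric] algebra_simps flip: exp_add)
    ultimately show ?thesis
      unfolding tgl_coef_def by (simp add: field_simps)
  qed
  then show ?thesis
    unfolding delta_t_def by (simp add: sum_distrib_left mult.assoc)
qed

lemma exp_weight_sq: "(exp x ^ k)\<^sup>2 = exp (2 * real k * x)"
  by (simp add: exp_of_nat_mult[symmetric] power2_eq_square algebra_simps flip: exp_add)

lemma one_le_exp_weight:
  assumes "0 \<le> \<tau>" "n \<le> N"
  shows "1 \<le> (exp (lam * \<tau>) ^ n)\<^sup>2 * exp (2 * \<bar>lam\<bar> * (real N * \<tau>))"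
proof -
  have "- (lam * \<tau> * real n) \<le> \<bar>lam\<bar> * \<tau> * real n"
    using assms(1) by (metis abs_ge_minus_self abs_mult abs_of_nonneg of_nat_0_le_iff zero_le_mult_iff)
  also have "\<dots> \<le> \<bar>lam\<bar> * (real N * \<tau>)"
    using assms by (simp add: mult_left_mono mult_right_mono mult.commute mult.left_commute)
  finally show ?thesis
    by (simp add: exp_weight_sq mult_ac flip: exp_add)
qed

lemma exp_weight_le:
  assumes "0 \<le> \<tau>" "0 \<le> \<alpha>" "\<alpha> \<le> 1" "1 \<le> m" "m \<le> N" "n \<le> N"
  shows "(exp (lam * \<tau>) ^ m)\<^sup>2
    \<le> exp (\<alpha> / 2 * lam * \<tau>) * (exp (lam * \<tau>) ^ n)\<^sup>2 * exp (2 * \<bar>lam\<bar> * (real N * \<tau>))"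
proof -
  define d where "d = 2 * real m - \<alpha> / 2 - 2 * real n"
  have "\<bar>d\<bar> \<le> 2 * real N" using assms by (simp add: d_def abs_le_iff)
  have "lam * \<tau> * d \<le> \<bar>lam\<bar> * \<tau> * \<bar>d\<bar>"
    using assms(1) by (metis abs_ge_self abs_mult abs_of_nonneg)
  also have "\<dots> \<le> \<bar>lam\<bar> * \<tau> * (2 * real N)"
    using \<open>\<bar>d\<bar> \<le> 2 * real N\<close> assms(1) by (intro mult_left_mono) auto
  finally have "2 * real m * (lam * \<tau>)
      \<le> \<alpha> / 2 * lam * \<tau> + 2 * real n * (lam * \<tau>) + 2 * \<bar>lam\<bar> * (real N * \<tau>)"
    by (simp add: d_def algebra_simps)
  then show ?thesis
    by (simp add: exp_weight_sq flip: exp_add)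
qed

locale tempered_compact_scheme =
  fixes \<alpha> lam \<tau> T h C :: real and M N :: nat and v S :: "nat \<Rightarrow> nat \<Rightarrow> real"
  assumes alpha_pos: "0 < \<alpha>" and alpha_less_1: "\<alpha> < 1"
    and tau_pos: "0 < \<tau>" and N_pos: "1 \<le> N" and T_eq: "T = real N * \<tau>"
    and h_pos: "0 < h" and M_pos: "1 \<le> M" and C_pos: "0 < C"
    and coercive: "\<And>u. u 0 = 0 \<Longrightarrow> u M = 0 \<Longrightarrow>
      C * grid_inner h M u u \<le> - grid_inner h M (delta_x2 h u) u"
    and scheme: "\<And>i n. 1 \<le> i \<Longrightarrow> i \<le> M - 1 \<Longrightarrow> 1 \<le> n \<Longrightarrow> n \<le> N \<Longrightarrow>
      A_x M (delta_t \<alpha> lam \<tau> v n) i - A_t \<alpha> (\<lambda>m. delta_x2 h (v m)) n i = S n i"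
    and boundary: "\<And>n. n \<le> N \<Longrightarrow> v n 0 = 0 \<and> v n M = 0"
    and exp_lam_tau_le: "exp (lam * \<tau>) \<le> 2 - \<alpha>"
begin

definition weighted :: "nat \<Rightarrow> nat \<Rightarrow> real" where
  "weighted m i = exp (lam * \<tau>) ^ m * v m i"

definition energy :: "nat \<Rightarrow> nat \<Rightarrow> real" where
  "energy j m = Ax_form M (weighted j) (weighted m)"

definition stability_bound :: real where
  "stability_bound = 3 / 2 * exp (2 * \<bar>lam\<bar> * T) * grid_inner h M (v 0) (v 0)
    + 3 * Gamma (1 - \<alpha>) * T powr \<alpha> * exp (2 * \<bar>lam\<bar> * T) / C
      * Max ((\<lambda>m. grid_inner h M (S m) (S m)) ` {0..N})"

lemma weighted_boundary: "m \<le> N \<Longrightarrow> weighted m 0 = 0 \<and> weighted m M = 0"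
  using boundary by (simp add: weighted_def)

lemma weighted_scheme:
  assumes "1 \<le> m" "m \<le> N" "1 \<le> i" "i \<le> M - 1"
  shows "\<tau> powr (- \<alpha>) * exp (\<alpha> / 2 * lam * \<tau>) * A_x M (\<lambda>j. \<Sum>k = 0..m. gl_coef \<alpha> k * weighted (m - k) j) i
      - delta_x2 h (\<lambda>j. (1 - \<alpha> / 2) * weighted m j + \<alpha> / 2 * exp (lam * \<tau>) * weighted (m - 1) j) i
    = exp (lam * \<tau>) ^ m * S m i"
proof -
  define E where "E = exp (lam * \<tau>)"
  have "E * E ^ (m - 1) = E ^ m" using assms(1) by (simp flip: power_Suc)
  then have "delta_x2 h (\<lambda>j. (1 - \<alpha> / 2) * weighted m j + \<alpha> / 2 * E * weighted (m - 1) j) i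
      = E ^ m * A_t \<alpha> (\<lambda>m. delta_x2 h (v m)) m i"
    using h_pos by (simp add: delta_x2_def A_t_def weighted_def E_def field_simps)
  moreover have "A_x M (delta_t \<alpha> lam \<tau> v m) i
      = \<tau> powr (- \<alpha>) * exp (\<alpha> / 2 * lam * \<tau>) / E ^ m
        * A_x M (\<lambda>j. \<Sum>k = 0..m. gl_coef \<alpha> k * weighted (m - k) j) i"
    unfolding delta_t_weighted_sum A_x_scale by (simp add: weighted_def E_def)
  moreover have "0 < E" by (simp add: E_def)
  ultimately show ?thesis
    using scheme[OF assms(3,4,1,2)] by (simp add: E_def field_simps)
qed

lemma energy_inequality:
  assumes "1 \<le> m" "m \<le> N"
  shows "\<tau> powr (- \<alpha>) * exp (\<alpha> / 2 * lam * \<tau>) * h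
      * (\<Sum>k = 0..m. gl_coef \<alpha> k * ((1 - \<alpha> / 2) * energy (m - k) m
          + \<alpha> / 2 * exp (lam * \<tau>) * energy (m - k) (m - 1)))
    \<le> 3 / C * (exp (lam * \<tau>) ^ m)\<^sup>2 * grid_inner h M (S m) (S m)"
proof -
  define U where "U j = (1 - \<alpha> / 2) * weighted m j + \<alpha> / 2 * exp (lam * \<tau>) * weighted (m - 1) j" for j
  have "U 0 = 0" "U M = 0"
    using weighted_boundary[of m] weighted_boundary[of "m - 1"] assms by (auto simp: U_def)
  then have "\<tau> powr (- \<alpha>) * exp (\<alpha> / 2 * lam * \<tau>) * h
      * Ax_form M (\<lambda>j. \<Sum>k = 0..m. gl_coef \<alpha> k * weighted (m - k) j) U
    \<le> 3 / C * grid_inner h M (\<lambda>i. exp (lam * \<tau>) ^ m * S m i) (\<lambda>i. exp (lam * \<tau>) ^ m * S m i)"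
    using h_pos C_pos M_pos coercive weighted_scheme[OF assms] unfolding U_def
    by (intro Ax_form_energy_estimate) (auto simp: mult.assoc)
  moreover have "Ax_form M (\<lambda>j. \<Sum>k = 0..m. gl_coef \<alpha> k * weighted (m - k) j) U
      = (\<Sum>k = 0..m. gl_coef \<alpha> k * ((1 - \<alpha> / 2) * energy (m - k) m
          + \<alpha> / 2 * exp (lam * \<tau>) * energy (m - k) (m - 1)))"
    unfolding U_def Ax_form_sum_left Ax_form_linear_right energy_def ..
  moreover have "grid_inner h M (\<lambda>i. exp (lam * \<tau>) ^ m * S m i) (\<lambda>i. exp (lam * \<tau>) ^ m * S m i)
      = (exp (lam * \<tau>) ^ m)\<^sup>2 * grid_inner h M (S m) (S m)"
    by (simp add: grid_inner_def sum_distrib_left power2_eq_square algebra_simps)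
  ultimately show ?thesis by simp
qed

lemma stability_bound_ge_source:
  assumes "m \<le> N"
  shows "3 * Gamma (1 - \<alpha>) * T powr \<alpha> * exp (2 * \<bar>lam\<bar> * T) / C * grid_inner h M (S m) (S m)
    \<le> stability_bound"
proof -
  have K: "0 \<le> 3 * Gamma (1 - \<alpha>) * T powr \<alpha> * exp (2 * \<bar>lam\<bar> * T) / C"
    using alpha_less_1 C_pos by (simp add: Gamma_real_pos less_imp_le)
  have "grid_inner h M (S m) (S m) \<le> Max ((\<lambda>m. grid_inner h M (S m) (S m)) ` {0..N})"
    using assms by (intro Max_ge) auto
  then have "3 * Gamma (1 - \<alpha>) * T powr \<alpha> * exp (2 * \<bar>lam\<bar> * T) / C * grid_inner h M (S m) (S m)
      \<le> 3 * Gamma (1 - \<alpha>) * T powr \<alpha> * exp (2 * \<bar>lam\<bar> * T) / C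
        * Max ((\<lambda>m. grid_inner h M (S m) (S m)) ` {0..N})"
    using K by (rule mult_left_mono)
  moreover have "0 \<le> 3 / 2 * exp (2 * \<bar>lam\<bar> * T) * grid_inner h M (v 0) (v 0)"
    using h_pos by (simp add: grid_inner_self_nonneg)
  ultimately show ?thesis
    unfolding stability_bound_def by linarith
qed

lemma stability_bound_ge_initial:
  "3 / 2 * exp (2 * \<bar>lam\<bar> * T) * grid_inner h M (v 0) (v 0) \<le> stability_bound"
proof -
  have "0 \<le> grid_inner h M (S 0) (S 0)"
    using h_pos by (simp add: grid_inner_self_nonneg)
  also have "\<dots> \<le> Max ((\<lambda>m. grid_inner h M (S m) (S m)) ` {0..N})"
    by (intro Max_ge) auto
  finally have "0 \<le> 3 * Gamma (1 - \<alpha>) * T powr \<alpha> * exp (2 * \<bar>lam\<bar> * T) / C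
      * Max ((\<lambda>m. grid_inner h M (S m) (S m)) ` {0..N})"
    using alpha_less_1 C_pos by (simp add: Gamma_real_pos less_imp_le)
  then show ?thesis
    unfolding stability_bound_def by linarith
qed

lemma initial_energy_le:
  assumes "n \<le> N"
  shows "energy 0 0 \<le> 8 * (exp (lam * \<tau>) ^ n)\<^sup>2 * stability_bound / h"
proof -
  have "weighted 0 = v 0"
    by (simp add: weighted_def fun_eq_iff)
  then have "h * energy 0 0 \<le> 12 * grid_inner h M (v 0) (v 0)"
    using Ax_form_bounds(2)[OF M_pos, of "v 0"] boundary[of 0] h_pos
    by (simp add: energy_def grid_inner_def mult_left_mono)
  also have "\<dots> \<le> 12 * ((exp (lam * \<tau>) ^ n)\<^sup>2 * exp (2 * \<bar>lam\<bar> * T)) * grid_inner h M (v 0) (v 0)"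
    using one_le_exp_weight[of \<tau> n N lam] tau_pos assms h_pos
    by (intro mult_right_mono grid_inner_self_nonneg) (auto simp: T_eq)
  also have "\<dots> = 8 * (exp (lam * \<tau>) ^ n)\<^sup>2 * (3 / 2 * exp (2 * \<bar>lam\<bar> * T) * grid_inner h M (v 0) (v 0))"
    by simp
  also have "\<dots> \<le> 8 * (exp (lam * \<tau>) ^ n)\<^sup>2 * stability_bound"
    using stability_bound_ge_initial by (intro mult_left_mono) auto
  finally show ?thesis
    using h_pos by (simp add: pos_le_divide_eq mult.commute)
qed

lemma source_term_le:
  assumes "1 \<le> m" "m \<le> N" "n \<le> N"
  shows "3 / C * (exp (lam * \<tau>) ^ m)\<^sup>2 * grid_inner h M (S m) (S m)
    \<le> \<tau> powr (- \<alpha>) * exp (\<alpha> / 2 * lam * \<tau>) * h * ((1 - \<alpha> / 2 + \<alpha> / 2 * exp (lam * \<tau>))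
      * (\<Sum>k = 0..m. gl_coef \<alpha> k) * (8 * (exp (lam * \<tau>) ^ n)\<^sup>2 * stability_bound / h))"
proof -
  define b where "b = (\<Sum>k = 0..m. gl_coef \<alpha> k)"
  define W where "W = exp (\<alpha> / 2 * lam * \<tau>) * (exp (lam * \<tau>) ^ n)\<^sup>2 * \<tau> powr (- \<alpha>)"
  define s where "s = 3 / C * grid_inner h M (S m) (S m)"
  have s: "0 \<le> s" using C_pos h_pos by (simp add: s_def grid_inner_self_nonneg)
  have W: "0 \<le> W" by (simp add: W_def)
  have b: "0 \<le> b" using sum_gl_coef_pos[OF alpha_less_1] by (simp add: b_def less_imp_le)
  have "0 \<le> 3 / 2 * exp (2 * \<bar>lam\<bar> * T) * grid_inner h M (v 0) (v 0)"
    using h_pos by (simp add: grid_inner_self_nonneg)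
  then have R: "0 \<le> stability_bound"
    using stability_bound_ge_initial by linarith
  have "3 / C * (exp (lam * \<tau>) ^ m)\<^sup>2 * grid_inner h M (S m) (S m) = s * (exp (lam * \<tau>) ^ m)\<^sup>2"
    by (simp add: s_def)
  also have "\<dots> \<le> s * (exp (\<alpha> / 2 * lam * \<tau>) * (exp (lam * \<tau>) ^ n)\<^sup>2 * exp (2 * \<bar>lam\<bar> * T))"
    using exp_weight_le[of \<tau> \<alpha> m N n lam] assms alpha_pos alpha_less_1 tau_pos s
    by (intro mult_left_mono) (auto simp: T_eq)
  also have "\<dots> = W * (s * exp (2 * \<bar>lam\<bar> * T) * \<tau> powr \<alpha>)"
    using tau_pos by (simp add: W_def powr_minus field_simps)
  also have "\<dots> \<le> W * (s * exp (2 * \<bar>lam\<bar> * T) * (2 * b * Gamma (1 - \<alpha>) * T powr \<alpha>))"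
    using sum_gl_coef_Gamma_ge_grid[OF alpha_pos alpha_less_1 tau_pos assms(2) N_pos] W s
    by (intro mult_left_mono) (auto simp: b_def T_eq)
  also have "\<dots> = W * (2 * b) * (3 * Gamma (1 - \<alpha>) * T powr \<alpha> * exp (2 * \<bar>lam\<bar> * T) / C
      * grid_inner h M (S m) (S m))"
    by (simp add: s_def)
  also have "\<dots> \<le> W * (2 * b) * stability_bound"
    using stability_bound_ge_source[OF assms(2)] W b by (intro mult_left_mono) auto
  also have "\<dots> \<le> W * (8 * (1 - \<alpha> / 2 + \<alpha> / 2 * exp (lam * \<tau>)) * b) * stability_bound"
  proof -
    have "0 \<le> \<alpha> * exp (lam * \<tau>)" using alpha_pos by simp
    then have "2 \<le> 8 * (1 - \<alpha> / 2 + \<alpha> / 2 * exp (lam * \<tau>))"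
      using alpha_less_1 by (simp add: algebra_simps)
    then show ?thesis
      using W b R by (intro mult_right_mono mult_left_mono) auto
  qed
  also have "\<dots> = \<tau> powr (- \<alpha>) * exp (\<alpha> / 2 * lam * \<tau>) * h * ((1 - \<alpha> / 2 + \<alpha> / 2 * exp (lam * \<tau>))
      * b * (8 * (exp (lam * \<tau>) ^ n)\<^sup>2 * stability_bound / h))"
    using h_pos by (simp add: W_def field_simps)
  finally show ?thesis
    by (simp add: b_def)
qed

lemma energy_sum_le:
  assumes "1 \<le> m" "m \<le> N" "n \<le> N"
  shows "(\<Sum>k = 0..m. gl_coef \<alpha> k * ((1 - \<alpha> / 2) * energy (m - k) m + \<alpha> / 2 * exp (lam * \<tau>) * energy (m - k) (m - 1)))
    \<le> (1 - \<alpha> / 2 + \<alpha> / 2 * exp (lam * \<tau>)) * (\<Sum>k = 0..m. gl_coef \<alpha> k)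
      * (8 * (exp (lam * \<tau>) ^ n)\<^sup>2 * stability_bound / h)"
proof -
  have "0 < \<tau> powr (- \<alpha>) * exp (\<alpha> / 2 * lam * \<tau>) * h"
    using tau_pos h_pos by simp
  moreover have "\<tau> powr (- \<alpha>) * exp (\<alpha> / 2 * lam * \<tau>) * h
      * (\<Sum>k = 0..m. gl_coef \<alpha> k * ((1 - \<alpha> / 2) * energy (m - k) m + \<alpha> / 2 * exp (lam * \<tau>) * energy (m - k) (m - 1)))
    \<le> \<tau> powr (- \<alpha>) * exp (\<alpha> / 2 * lam * \<tau>) * h
      * ((1 - \<alpha> / 2 + \<alpha> / 2 * exp (lam * \<tau>)) * (\<Sum>k = 0..m. gl_coef \<alpha> k)
        * (8 * (exp (lam * \<tau>) ^ n)\<^sup>2 * stability_bound / h))"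
    by (rule order_trans[OF energy_inequality[OF assms(1,2)] source_term_le[OF assms]])
  ultimately show ?thesis
    by (simp only: mult_le_cancel_left_pos)
qed

lemma stability:
  assumes "n \<le> N"
  shows "grid_inner h M (v n) (v n) \<le> stability_bound"
proof -
  \<comment> \<open>The factor \<open>E\<^sup>2\<^sup>n\<close> lets the bound on the weighted energies translate back to \<open>v n\<close>.\<close>
  define Q where "Q = 8 * (exp (lam * \<tau>) ^ n)\<^sup>2 * stability_bound / h"
  have energy_le: "energy n n \<le> Q"
  proof (rule gl_energy_le[where g = "gl_coef \<alpha>" and \<alpha> = \<alpha> and \<mu> = "\<alpha> / 2 * exp (lam * \<tau>)"
      and p = energy and N = N and Q = Q])
    show "gl_coef \<alpha> 0 = 1" by (rule gl_coef_0)
    show "gl_coef \<alpha> 1 = - \<alpha>" by (rule gl_coef_1)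
    show "gl_coef \<alpha> k \<le> 0" if "2 \<le> k" for k
      using gl_coef_nonpos alpha_pos alpha_less_1 that by simp
    show "\<alpha> / 2 * exp (lam * \<tau>) \<le> \<alpha> * (1 - \<alpha> / 2)"
      using mult_left_mono[OF exp_lam_tau_le, of "\<alpha> / 2"] alpha_pos by (simp add: algebra_simps)
    show "2 * energy j m \<le> energy j j + energy m m" if "j \<le> N" "m \<le> N" for j m
      using weighted_boundary[OF that(1)] weighted_boundary[OF that(2)]
      by (simp add: energy_def Ax_form_cauchy_schwarz[OF M_pos])
    show "0 \<le> (\<Sum>k = 0..m. gl_coef \<alpha> k)" for m
      using sum_gl_coef_pos[OF alpha_less_1] less_imp_le by blast
    show "energy 0 0 \<le> Q"
      unfolding Q_def using assms by (rule initial_energy_le)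
    show "(\<Sum>k = 0..m. gl_coef \<alpha> k * ((1 - \<alpha> / 2) * energy (m - k) m + \<alpha> / 2 * exp (lam * \<tau>) * energy (m - k) (m - 1)))
        \<le> (1 - \<alpha> / 2 + \<alpha> / 2 * exp (lam * \<tau>)) * (\<Sum>k = 0..m. gl_coef \<alpha> k) * Q"
      if "1 \<le> m" "m \<le> N" for m
      unfolding Q_def using that assms by (rule energy_sum_le)
  qed (use alpha_pos alpha_less_1 assms in \<open>auto simp: energy_def Ax_form_commute\<close>)
  have "8 * (exp (lam * \<tau>) ^ n)\<^sup>2 * (\<Sum>i = 1..M - 1. v n i * v n i) \<le> energy n n"
    using Ax_form_bounds(1)[OF M_pos, of "weighted n"] weighted_boundary[OF assms]
    by (simp add: energy_def weighted_def power2_eq_square sum_distrib_left algebra_simps)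
  then have "8 * (exp (lam * \<tau>) ^ n)\<^sup>2 * grid_inner h M (v n) (v n) \<le> h * energy n n"
    using h_pos mult_left_mono[of _ "energy n n" h] by (simp add: grid_inner_def mult_ac)
  also have "\<dots> \<le> 8 * (exp (lam * \<tau>) ^ n)\<^sup>2 * stability_bound"
    using energy_le h_pos by (simp add: Q_def pos_le_divide_eq mult.commute)
  finally show ?thesis by simp
qed

end

theorem theorem4p1:
  fixes \<alpha> lam T a b C :: real and N M :: nat
    and v S :: "nat \<Rightarrow> nat \<Rightarrow> real" and v0 :: "real \<Rightarrow> real"
  assumes "0 < \<alpha>" "\<alpha> < 1" "0 < T" "a < b" "N \<ge> 2" "M \<ge> 2"
    and C_pos: "C > 0"
    and C_Omega: "\<And>(M' :: nat) (u :: nat \<Rightarrow> real). M' \<ge> 1 \<Longrightarrow> u 0 = 0 \<Longrightarrow> u M' = 0 \<Longrightarrow>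
        - grid_inner ((b - a) / real M') M' (delta_x2 ((b - a) / real M') u) u
          \<ge> C * (grid_norm ((b - a) / real M') M' u) ^ 2"
    and eq: "\<And>i n. 1 \<le> i \<Longrightarrow> i \<le> M - 1 \<Longrightarrow> 1 \<le> n \<Longrightarrow> n \<le> N \<Longrightarrow>
        A_x M (delta_t \<alpha> lam (T / real N) v n) i
        - A_t \<alpha> (\<lambda>m. delta_x2 ((b - a) / real M) (v m)) n i = S n i"
    and bc: "\<And>n. 1 \<le> n \<Longrightarrow> n \<le> N \<Longrightarrow> v n 0 = 0 \<and> v n M = 0"
    and init: "\<And>i. i \<le> M \<Longrightarrow> v 0 i = v0 (a + real i * ((b - a) / real M))"
    and v0_bd: "v0 a = 0" "v0 b = 0"
    and cond: "2 - \<alpha> - exp (lam * (T / real N)) \<ge> 0"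
  shows "\<And>n. 1 < n \<Longrightarrow> n \<le> N \<Longrightarrow>
     (grid_norm ((b - a) / real M) M (v n)) ^ 2
       \<le> 3 / 2 * exp (2 * \<bar>lam\<bar> * T) * (grid_norm ((b - a) / real M) M (v 0)) ^ 2
        + 3 * Gamma (1 - \<alpha>) * T powr \<alpha> * exp (2 * \<bar>lam\<bar> * T) / C
          * Max ((\<lambda>m. (grid_norm ((b - a) / real M) M (S m)) ^ 2) ` {0..N})"
proof -
  let ?h = "(b - a) / real M"
  have h_pos: "0 < ?h" using assms by simp
  have norm_sq: "grid_norm ?h M u ^ 2 = grid_inner ?h M u u" for u
    using h_pos by (simp add: grid_norm_sq)
  interpret tempered_compact_scheme \<alpha> lam "T / real N" T ?h C M N v S
  proof
    show "C * grid_inner ?h M u u \<le> - grid_inner ?h M (delta_x2 ?h u) u" if "u 0 = 0" "u M = 0" for u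
      using C_Omega[of M u] that assms by (simp add: norm_sq)
    show "v n 0 = 0 \<and> v n M = 0" if "n \<le> N" for n
    proof (cases "n = 0")
      case True
      have "a + real M * ?h = b" using assms by simp
      then show ?thesis using True init[of 0] init[of M] v0_bd by simp
    qed (use bc that in auto)
  qed (use assms in auto)
  show "?thesis n" if "1 < n" "n \<le> N" for n
    using stability[OF that(2)] unfolding stability_bound_def norm_sq .
qed

end
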